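(* For each term $t$ there is at most one type $\tau$ such that $\Gamma\vdash t:\tau$ for some context $\Gamma$. If such a $\tau$ exists, there is a smallest context $\Gamma$ with $\Gamma\vdash t:\tau$, and it coincides with the set of free variables of $t$ (in the usual sense).
   Context: Types: $\rho,\tau::=\Diamond\mid\mathbf{B}\mid\tau\multimap\rho\mid\tau\otimes\rho\mid\tau\times\rho\mid\mathbf{L}(\tau)$. Raw terms: $r,s,t::=x^\tau\mid c\mid\lambda x^\tau.\,t\mid\langle t,s\rangle\mid ts\mid\{t\}$, where each variable $x^\tau$ carries a type (infinitely many variables of each type), application associates to the left, terms are identified up to renaming of bound variables ($\lambda$ is the only binder), and the constants $c$ with their types are $\mathsf{tt},\mathsf{ff}:\mathbf{B}$; $\mathsf{nil}_\tau:\mathbf{L}(\tau)$; $\mathsf{cons}_\tau:\Diamond\multimap\tau\multimap\mathbf{L}(\tau)\multimap\mathbf{L}(\tau)$; $\otimes_{\tau,\rho}:\tau\multimap\rho\multimap\tau\otimes\rho$. A context is a finite set of typed variables; $\Gamma_1,\Gamma_2$ denotes $\Gamma_1\cup\Gamma_2$ and presupposes $\Gamma_1\cap\Gamma_2=\emptyset$; $x^\tau$ also denotes $\{x^\tau\}$. The relation $\Gamma\vdash t:\tau$ is inductively defined by: (Var) $\Gamma,x^\tau\vdash x:\tau$; (Const) $\Gamma\vdash c:\tau$ for a constant $c$ of type $\tau$; ($\multimap^+$) from $\Gamma\cup\{x^\tau\}\vdash t:\rho$ infer $\Gamma\vdash\lambda x^\tau.t:\tau\multimap\rho$; ($\multimap^-$)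 from $\Gamma_1\vdash t:\tau\multimap\rho$ and $\Gamma_2\vdash s:\tau$ infer $\Gamma_1,\Gamma_2\vdash ts:\rho$; ($\times^+$) from $\Gamma\vdash t:\tau$ and $\Gamma\vdash s:\rho$ infer $\Gamma\vdash\langle t,s\rangle:\tau\times\rho$; ($\times^-_1$) from $\Gamma\vdash t:\tau\times\rho$ infer $\Gamma\vdash t\,\mathsf{tt}:\tau$; ($\times^-_0$) from $\Gamma\vdash t:\tau\times\rho$ infer $\Gamma\vdash t\,\mathsf{ff}:\rho$; ($\mathbf{B}^-$) from $\Gamma_1\vdash t:\mathbf{B}$, $\Gamma_2\vdash s:\tau$, $\Gamma_2\vdash r:\tau$ infer $\Gamma_1,\Gamma_2\vdash t\langle s,r\rangle:\tau$; ($\otimes^-$) from $\Gamma_1\vdash t:\tau\otimes\rho$ and $\Gamma_2,x^\tau,y^\rho\vdash s:\sigma$ infer $\Gamma_1,\Gamma_2\vdash t(\lambda x^\tau.\lambda y^\rho.s):\sigma$; ($\mathbf{L}^-$) from $\Gamma\vdash t:\mathbf{L}(\tau)$ and $\emptyset\vdash s:\Diamond\multimap\tau\multimap\rho\multimap\rho$ infer $\Gamma\vdash t\{s\}:\rho\multimap\rho$. *)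

theory Defs
  imports Main
begin

datatype ty = Dia | Bool | Lolli ty ty | Tensor ty ty | Times ty ty | Lst ty

datatype var = Var nat ty

fun vty :: "var \<Rightarrow> ty" where "vty (Var n T) = T"

datatype const = TT | FF | NilC ty | ConsC ty | TensC ty ty

fun cty :: "const \<Rightarrow> ty" where
  "cty TT = Bool"
| "cty FF = Bool"
| "cty (NilC T) = Lst T"
| "cty (ConsC T) = Lolli Dia (Lolli T (Lolli (Lst T) (Lst T)))"
| "cty (TensC T R) = Lolli T (Lolli R (Tensor T R))"

text \<open>Terms up to renaming of bound variables, in locally nameless representation:
  free variables are named, bound variables are de Bruijn indices.
  \<open>Lam T b\<close> is \<open>\<lambda>x\<^sup>T. b\<close>, \<open>Pair\<close> is \<open>\<langle>t,s\<rangle>\<close>, \<open>App\<close> is application, \<open>Brace t\<close> is \<open>{t}\<close>.\<close>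
datatype tm = FVar var | BVar nat | Cst const | Lam ty tm | Pair tm tm | App tm tm | Brace tm

fun fv :: "tm \<Rightarrow> var set" where
  "fv (FVar x) = {x}"
| "fv (BVar i) = {}"
| "fv (Cst c) = {}"
| "fv (Lam T t) = fv t"
| "fv (Pair t s) = fv t \<union> fv s"
| "fv (App t s) = fv t \<union> fv s"
| "fv (Brace t) = fv t"

fun opn :: "nat \<Rightarrow> tm \<Rightarrow> tm \<Rightarrow> tm" where
  "opn k u (FVar x) = FVar x"
| "opn k u (BVar i) = (if i = k then u else BVar i)"
| "opn k u (Cst c) = Cst c"
| "opn k u (Lam T t) = Lam T (opn (Suc k) u t)"
| "opn k u (Pair t s) = Pair (opn k u t) (opn k u s)"
| "opn k u (App t s) = App (opn k u t) (opn k u s)"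
| "opn k u (Brace t) = Brace (opn k u t)"

text \<open>A binder \<open>\<lambda>x\<^sup>\<tau>. t\<close> is represented by any
  name x not free in the body (alpha-equivalence).\<close>
inductive typing :: "var set \<Rightarrow> tm \<Rightarrow> ty \<Rightarrow> bool" where
  tVar: "finite \<Gamma> \<Longrightarrow> x \<in> \<Gamma> \<Longrightarrow> typing \<Gamma> (FVar x) (vty x)"
| tConst: "finite \<Gamma> \<Longrightarrow> typing \<Gamma> (Cst c) (cty c)"
| tLolliI: "x \<notin> fv b \<Longrightarrow> vty x = T \<Longrightarrow> typing (\<Gamma> \<union> {x}) (opn 0 (FVar x) b) R
            \<Longrightarrow> typing \<Gamma> (Lam T b) (Lolli T R)"
| tLolliE: "typing \<Gamma>1 t (Lolli T R) \<Longrightarrow> typing \<Gamma>2 s T \<Longrightarrow> \<Gamma>1 \<inter> \<Gamma>2 = {}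
            \<Longrightarrow> typing (\<Gamma>1 \<union> \<Gamma>2) (App t s) R"
| tTimesI: "typing \<Gamma> t T \<Longrightarrow> typing \<Gamma> s R \<Longrightarrow> typing \<Gamma> (Pair t s) (Times T R)"
| tTimesE1: "typing \<Gamma> t (Times T R) \<Longrightarrow> typing \<Gamma> (App t (Cst TT)) T"
| tTimesE0: "typing \<Gamma> t (Times T R) \<Longrightarrow> typing \<Gamma> (App t (Cst FF)) R"
| tBoolE: "typing \<Gamma>1 t Bool \<Longrightarrow> typing \<Gamma>2 s T \<Longrightarrow> typing \<Gamma>2 r T \<Longrightarrow> \<Gamma>1 \<inter> \<Gamma>2 = {}
            \<Longrightarrow> typing (\<Gamma>1 \<union> \<Gamma>2) (App t (Pair s r)) T"
| tTensorE: "typing \<Gamma>1 t (Tensor T R) \<Longrightarrow> vty x = T \<Longrightarrow> vty y = R \<Longrightarrow> x \<noteq> y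
            \<Longrightarrow> x \<notin> fv s \<Longrightarrow> y \<notin> fv s \<Longrightarrow> x \<notin> \<Gamma>2 \<Longrightarrow> y \<notin> \<Gamma>2
            \<Longrightarrow> typing (\<Gamma>2 \<union> {x, y}) (opn 0 (FVar y) (opn 1 (FVar x) s)) S
            \<Longrightarrow> \<Gamma>1 \<inter> \<Gamma>2 = {}
            \<Longrightarrow> typing (\<Gamma>1 \<union> \<Gamma>2) (App t (Lam T (Lam R s))) S"
| tLstE: "typing \<Gamma> t (Lst T) \<Longrightarrow> typing {} s (Lolli Dia (Lolli T (Lolli R R)))
            \<Longrightarrow> typing \<Gamma> (App t (Brace s)) (Lolli R R)"

end

theory Submission
  imports Defs
begin

text \<open>Typing is syntax-directed once the type of the function part of an application is known:
  that type decides between \<open>\<multimap>\<^sup>-\<close> and the eliminations of \<open>\<times>\<close>, \<open>\<^bold>B\<close>, \<open>\<otimes>\<close> and \<open>\<^bold>L\<close>.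
  As variables carry their types, the type of a typable term is computed by an inference function
  that needs no context, typing bound variables by the annotations of their binders. As for
  contexts, a context typing a term contains its free variables, and a derivation stays valid when
  its context is shrunk to any subset still containing them, each half of a split being shrunk
  separately.\<close>

fun infer :: "ty list \<Rightarrow> tm \<Rightarrow> ty option" where
  "infer \<Delta> (FVar x) = Some (vty x)"
| "infer \<Delta> (BVar i) = (if i < length \<Delta> then Some (\<Delta> ! i) else None)"
| "infer \<Delta> (Cst c) = Some (cty c)"
| "infer \<Delta> (Lam T b) = map_option (Lolli T) (infer (T # \<Delta>) b)"
| "infer \<Delta> (Pair t s) = (case (infer \<Delta> t, infer \<Delta> s) of
      (Some T, Some R) \<Rightarrow> Some (Times T R) | _ \<Rightarrow> None)"
| "infer \<Delta> (App t (Cst TT)) = (case infer \<Delta> t of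
      Some (Lolli _ R) \<Rightarrow> Some R | Some (Times T _) \<Rightarrow> Some T | _ \<Rightarrow> None)"
| "infer \<Delta> (App t (Cst FF)) = (case infer \<Delta> t of
      Some (Lolli _ R) \<Rightarrow> Some R | Some (Times _ R) \<Rightarrow> Some R | _ \<Rightarrow> None)"
| "infer \<Delta> (App t (Pair s r)) = (case infer \<Delta> t of
      Some (Lolli _ R) \<Rightarrow> Some R | Some Bool \<Rightarrow> infer \<Delta> s | _ \<Rightarrow> None)"
| "infer \<Delta> (App t (Lam T (Lam R s))) = (case infer \<Delta> t of
      Some (Lolli _ S) \<Rightarrow> Some S | Some (Tensor _ _) \<Rightarrow> infer (R # T # \<Delta>) s | _ \<Rightarrow> None)"
  (* no case for a \<multimap>-typed t: a term {s} on its own is never typable *)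
| "infer \<Delta> (App t (Brace s)) = (case (infer \<Delta> t, infer \<Delta> s) of
      (Some (Lst _), Some (Lolli _ (Lolli _ (Lolli R _)))) \<Rightarrow> Some (Lolli R R) | _ \<Rightarrow> None)"
| "infer \<Delta> (App t s) = (case infer \<Delta> t of Some (Lolli _ R) \<Rightarrow> Some R | _ \<Rightarrow> None)"
| "infer \<Delta> (Brace t) = None"

lemma infer_opn_FVar:
  "k < length \<Delta> \<Longrightarrow> \<Delta> ! k = vty x \<Longrightarrow> infer \<Delta> (opn k (FVar x) t) = infer \<Delta> t"
  by (induction \<Delta> t arbitrary: k rule: infer.induct) (auto split: option.split ty.split)

lemma typing_infer: "typing \<Gamma> t T \<Longrightarrow> infer \<Delta> t = Some T"
proof (induction arbitrary: \<Delta> rule: typing.induct)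
  case (tLolliE \<Gamma>1 t T R \<Gamma>2 s)
  then show ?case by (cases "(\<Delta>, App t s)" rule: infer.cases) auto
next
  case (tLolliI x b T \<Gamma> R)
  then show ?case using infer_opn_FVar[of 0 "T # \<Delta>" x b] by simp
next
  case (tTensorE \<Gamma>1 t T R x y s \<Gamma>2 S)
  then show ?case
    using infer_opn_FVar[of 0 "R # T # \<Delta>" y "opn 1 (FVar x) s"]
      infer_opn_FVar[of 1 "R # T # \<Delta>" x s]
    by simp
qed simp_all

lemma typing_unique:
  assumes "typing \<Gamma>1 t T1" and "typing \<Gamma>2 t T2"
  shows "T1 = T2"
  using typing_infer[OF assms(1), of "[]"] typing_infer[OF assms(2), of "[]"] by simp

lemma fv_subset_fv_opn: "fv t \<subseteq> fv (opn k u t)"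
  by (induction t arbitrary: k) auto

lemma fv_opn_subset: "fv (opn k u t) \<subseteq> fv t \<union> fv u"
  by (induction t arbitrary: k) auto

lemma typing_fv_subset: "typing \<Gamma> t T \<Longrightarrow> fv t \<subseteq> \<Gamma>"
proof (induction rule: typing.induct)
  case (tLolliI x b T \<Gamma> R)
  then show ?case using fv_subset_fv_opn[of b 0 "FVar x"] by auto
next
  case (tTensorE \<Gamma>1 t T R x y s \<Gamma>2 S)
  then show ?case
    using fv_subset_fv_opn[of s 1 "FVar x"] fv_subset_fv_opn[of "opn 1 (FVar x) s" 0 "FVar y"]
    by auto
qed auto

lemma typing_strengthen: "typing \<Gamma> t T \<Longrightarrow> fv t \<subseteq> \<Gamma>' \<Longrightarrow> \<Gamma>' \<subseteq> \<Gamma> \<Longrightarrow> typing \<Gamma>' t T"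
proof (induction arbitrary: \<Gamma>' rule: typing.induct)
  case (tVar \<Gamma> x)
  then show ?case by (simp add: finite_subset typing.tVar)
next
  case (tConst \<Gamma> c)
  then show ?case by (simp add: finite_subset typing.tConst)
next
  case (tLolliI x b T \<Gamma> R)
  have "typing (\<Gamma>' \<union> {x}) (opn 0 (FVar x) b) R"
    using tLolliI.prems fv_opn_subset[of 0 "FVar x" b] by (intro tLolliI.IH) auto
  with tLolliI.hyps(1,2) show ?case by (rule typing.tLolliI)
next
  case (tLolliE \<Gamma>1 t T R \<Gamma>2 s)
  have "fv t \<subseteq> \<Gamma>1" "fv s \<subseteq> \<Gamma>2" using tLolliE.hyps typing_fv_subset by auto
  with tLolliE have "typing (\<Gamma>' \<inter> \<Gamma>1) t (Lolli T R)" "typing (\<Gamma>' \<inter> \<Gamma>2) s T" by auto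
  with tLolliE.hyps(3) have "typing ((\<Gamma>' \<inter> \<Gamma>1) \<union> (\<Gamma>' \<inter> \<Gamma>2)) (App t s) R"
    by (intro typing.tLolliE) auto
  with tLolliE.prems(2) show ?case by (simp add: Int_absorb2 flip: Int_Un_distrib)
next
  case (tTimesI \<Gamma> t T s R)
  then show ?case by (auto intro: typing.tTimesI)
next
  case (tTimesE1 \<Gamma> t T R)
  then show ?case by (auto intro: typing.tTimesE1)
next
  case (tTimesE0 \<Gamma> t T R)
  then show ?case by (auto intro: typing.tTimesE0)
next
  case (tBoolE \<Gamma>1 t \<Gamma>2 s T r)
  have "fv t \<subseteq> \<Gamma>1" "fv s \<subseteq> \<Gamma>2" "fv r \<subseteq> \<Gamma>2" using tBoolE.hyps typing_fv_subset by auto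
  with tBoolE have "typing (\<Gamma>' \<inter> \<Gamma>1) t Bool" "typing (\<Gamma>' \<inter> \<Gamma>2) s T" "typing (\<Gamma>' \<inter> \<Gamma>2) r T"
    by auto
  with tBoolE.hyps(4) have "typing ((\<Gamma>' \<inter> \<Gamma>1) \<union> (\<Gamma>' \<inter> \<Gamma>2)) (App t (Pair s r)) T"
    by (intro typing.tBoolE) auto
  with tBoolE.prems(2) show ?case by (simp add: Int_absorb2 flip: Int_Un_distrib)
next
  case (tTensorE \<Gamma>1 t T R x y s \<Gamma>2 S)
  let ?s' = "opn 0 (FVar y) (opn 1 (FVar x) s)"
  have "fv t \<subseteq> \<Gamma>1" using tTensorE.hyps typing_fv_subset by auto
  with tTensorE have t: "typing (\<Gamma>' \<inter> \<Gamma>1) t (Tensor T R)" by auto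
  have "fv s \<subseteq> \<Gamma>2"
    using typing_fv_subset[OF tTensorE.hyps(9)] tTensorE.hyps(5,6)
      fv_subset_fv_opn[of s 1 "FVar x"] fv_subset_fv_opn[of "opn 1 (FVar x) s" 0 "FVar y"]
    by auto
  then have s: "typing ((\<Gamma>' \<inter> \<Gamma>2) \<union> {x, y}) ?s' S"
    using tTensorE.prems fv_opn_subset[of 0 "FVar y" "opn 1 (FVar x) s"] fv_opn_subset[of 1 "FVar x" s]
    by (intro tTensorE.IH(2)) auto
  from t s tTensorE.hyps
  have "typing ((\<Gamma>' \<inter> \<Gamma>1) \<union> (\<Gamma>' \<inter> \<Gamma>2)) (App t (Lam T (Lam R s))) S"
    by (intro typing.tTensorE) auto
  with tTensorE.prems(2) show ?case by (simp add: Int_absorb2 flip: Int_Un_distrib)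
next
  case (tLstE \<Gamma> t T s R)
  then show ?case by (auto intro: typing.tLstE)
qed

theorem lemma2p6:
  fixes t :: tm
  shows "(\<forall>\<Gamma>1 \<Gamma>2 T1 T2. typing \<Gamma>1 t T1 \<and> typing \<Gamma>2 t T2 \<longrightarrow> T1 = T2) \<and>
         (\<forall>T. (\<exists>\<Gamma>. typing \<Gamma> t T) \<longrightarrow>
              (\<exists>\<Gamma>0. typing \<Gamma>0 t T \<and> (\<forall>\<Gamma>. typing \<Gamma> t T \<longrightarrow> \<Gamma>0 \<subseteq> \<Gamma>) \<and> \<Gamma>0 = fv t))"
proof (intro conjI allI impI)
  fix \<Gamma>1 \<Gamma>2 T1 T2
  assume "typing \<Gamma>1 t T1 \<and> typing \<Gamma>2 t T2"
  then show "T1 = T2" using typing_unique by blast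
next
  fix T
  assume "\<exists>\<Gamma>. typing \<Gamma> t T"
  then obtain \<Gamma> where "typing \<Gamma> t T" ..
  then have "typing (fv t) t T" using typing_strengthen typing_fv_subset by blast
  then show "\<exists>\<Gamma>0. typing \<Gamma>0 t T \<and> (\<forall>\<Gamma>. typing \<Gamma> t T \<longrightarrow> \<Gamma>0 \<subseteq> \<Gamma>) \<and> \<Gamma>0 = fv t"
    using typing_fv_subset by blast
qed

end
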